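(* Let $(\Sigma,\theta)$ be a Noetherian topological space. The map $S$ sending a topology $\tau$ on $\Sigma^*$ to the topology generated by the sets $\uparrow_{\le^*}(UV)$ for $U,V\in\tau$ and $\uparrow_{\le^*}W$ for $W\in\theta$ is a refinement function over $\Sigma^*$.
   Context: $\Sigma^*$ is the set of finite words; $UV$ is concatenation; one-letter words are identified with letters. $\le$ is the specialisation preorder of $\theta$; Higman's ordering $u\le^* w$ holds iff there is a strictly increasing $h$ from positions of $u$ to positions of $w$ with $u_i\le w_{h(i)}$; $\uparrow_{\le^*}$ denotes upward closure. A space is Noetherian if every subset is compact. A refinement function over a set $X$ is a map from topologies on $X$ to topologies on $X$ that is monotone for inclusion and sends Noetherian topologies to Noetherian topologies. *)

theory Defs
  imports "HOL-Analysis.Analysis"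
begin

definition spec_le :: "'a topology \<Rightarrow> 'a \<Rightarrow> 'a \<Rightarrow> bool" where
  "spec_le \<theta> x y \<longleftrightarrow> x \<in> \<theta> closure_of {y}"

definition higman_le :: "('a \<Rightarrow> 'a \<Rightarrow> bool) \<Rightarrow> 'a list \<Rightarrow> 'a list \<Rightarrow> bool" where
  "higman_le le u w \<longleftrightarrow>
     (\<exists>h. strict_mono_on {..<length u} h \<and> (\<forall>i<length u. h i < length w \<and> le (u ! i) (w ! h i)))"

definition up_closure :: "('b \<Rightarrow> 'b \<Rightarrow> bool) \<Rightarrow> 'b set \<Rightarrow> 'b set" where
  "up_closure le A = {w. \<exists>u\<in>A. le u w}"

definition concat_lang :: "'a list set \<Rightarrow> 'a list set \<Rightarrow> 'a list set" where
  "concat_lang U V = {u @ v | u v. u \<in> U \<and> v \<in> V}"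

definition noetherian_space :: "'a topology \<Rightarrow> bool" where
  "noetherian_space T \<longleftrightarrow> (\<forall>A. A \<subseteq> topspace T \<longrightarrow> compactin T A)"

definition refinement_function :: "'b set \<Rightarrow> ('b topology \<Rightarrow> 'b topology) \<Rightarrow> bool" where
  "refinement_function X F \<longleftrightarrow>
     (\<forall>\<tau>. topspace \<tau> = X \<longrightarrow> topspace (F \<tau>) = X) \<and>
     (\<forall>\<tau> \<tau>'. topspace \<tau> = X \<and> topspace \<tau>' = X \<and> (\<forall>U. openin \<tau> U \<longrightarrow> openin \<tau>' U)
         \<longrightarrow> (\<forall>U. openin (F \<tau>) U \<longrightarrow> openin (F \<tau>') U)) \<and>
     (\<forall>\<tau>. topspace \<tau> = X \<and> noetherian_space \<tau> \<longrightarrow> noetherian_space (F \<tau>))"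

text \<open>The map S of the statement; the whole space is included among the generators
  (standard subbasis convention).\<close>
definition word_refine :: "'a topology \<Rightarrow> 'a list topology \<Rightarrow> 'a list topology" where
  "word_refine \<theta> \<tau> = topology_generated_by
     (insert UNIV
       ({up_closure (higman_le (spec_le \<theta>)) (concat_lang U V) | U V. openin \<tau> U \<and> openin \<tau> V} \<union>
        {up_closure (higman_le (spec_le \<theta>)) ((\<lambda>a. [a]) ` W) | W. openin \<theta> W}))"

end

theory Submission
  imports Defs
begin

text \<open>A space is Noetherian iff every family of open sets has a finite subfamily with the same
  union. By Alexander's subbase theorem it suffices to check this for subfamilies of a subbase.
  Upward closure and concatenation commute with unions, so the generators of \<open>S \<tau>\<close> are images
  of open rectangles of \<open>\<tau> \<times> \<tau>\<close> and of open sets of \<open>\<theta>\<close> under union-preserving maps, and the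
  property passes from \<open>\<tau> \<times> \<tau>\<close> (Noetherian, again by Alexander) and \<open>\<theta>\<close> to them. Nothing about
  Higman's ordering is used beyond this.\<close>

definition noetherian_family :: "'a set set \<Rightarrow> bool" where
  "noetherian_family \<A> \<longleftrightarrow> (\<forall>\<C> \<subseteq> \<A>. \<exists>\<C>'. finite \<C>' \<and> \<C>' \<subseteq> \<C> \<and> \<Union>\<C> \<subseteq> \<Union>\<C>')"

lemma noetherian_familyD:
  assumes "noetherian_family \<A>" "\<C> \<subseteq> \<A>"
  obtains \<C>' where "finite \<C>'" "\<C>' \<subseteq> \<C>" "\<Union>\<C> \<subseteq> \<Union>\<C>'"
  using assms unfolding noetherian_family_def by (elim allE impE) auto

lemma noetherian_family_subset:
  "noetherian_family \<B> \<Longrightarrow> \<A> \<subseteq> \<B> \<Longrightarrow> noetherian_family \<A>"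
  unfolding noetherian_family_def by (meson subset_trans)

lemma finite_imp_noetherian_family: "finite \<A> \<Longrightarrow> noetherian_family \<A>"
  unfolding noetherian_family_def by (meson finite_subset order_refl)

lemma noetherian_family_Un:
  assumes "noetherian_family \<A>" "noetherian_family \<B>"
  shows "noetherian_family (\<A> \<union> \<B>)"
  unfolding noetherian_family_def
proof (intro allI impI)
  fix \<C> assume "\<C> \<subseteq> \<A> \<union> \<B>"
  obtain \<C>\<^sub>1 where "finite \<C>\<^sub>1" "\<C>\<^sub>1 \<subseteq> \<C> \<inter> \<A>" "\<Union>(\<C> \<inter> \<A>) \<subseteq> \<Union>\<C>\<^sub>1"
    using noetherian_familyD[OF assms(1), of "\<C> \<inter> \<A>"] by blast
  moreover obtain \<C>\<^sub>2 where "finite \<C>\<^sub>2" "\<C>\<^sub>2 \<subseteq> \<C> \<inter> \<B>" "\<Union>(\<C> \<inter> \<B>) \<subseteq> \<Union>\<C>\<^sub>2"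
    using noetherian_familyD[OF assms(2), of "\<C> \<inter> \<B>"] by blast
  ultimately show "\<exists>\<C>'. finite \<C>' \<and> \<C>' \<subseteq> \<C> \<and> \<Union>\<C> \<subseteq> \<Union>\<C>'"
    using \<open>\<C> \<subseteq> \<A> \<union> \<B>\<close> by (intro exI[of _ "\<C>\<^sub>1 \<union> \<C>\<^sub>2"]) blast
qed

lemma noetherian_family_insert:
  "noetherian_family \<A> \<Longrightarrow> noetherian_family (insert A \<A>)"
  using noetherian_family_Un[OF finite_imp_noetherian_family[of "{A}"]] by simp

lemma noetherian_family_image:
  assumes F: "\<And>\<C>. F (\<Union>\<C>) = \<Union>(F ` \<C>)" and "noetherian_family \<A>"
  shows "noetherian_family (F ` \<A>)"
  unfolding noetherian_family_def
proof (intro allI impI)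
  fix \<C> assume "\<C> \<subseteq> F ` \<A>"
  define \<D> where "\<D> = {A \<in> \<A>. F A \<in> \<C>}"
  have \<C>: "\<C> = F ` \<D>" using \<open>\<C> \<subseteq> F ` \<A>\<close> unfolding \<D>_def by blast
  obtain \<D>' where \<D>': "finite \<D>'" "\<D>' \<subseteq> \<D>" "\<Union>\<D> \<subseteq> \<Union>\<D>'"
    using noetherian_familyD[OF \<open>noetherian_family \<A>\<close>, of \<D>] unfolding \<D>_def by blast
  have F_mono: "F A \<subseteq> F B" if "A \<subseteq> B" for A B
  proof -
    have "F B = F A \<union> F B" using F[of "{A, B}"] that by (simp add: sup.absorb2)
    then show ?thesis by blast
  qed
  have "\<Union>\<C> = F (\<Union>\<D>)" by (simp add: \<C> F)
  also have "\<dots> \<subseteq> F (\<Union>\<D>')" using \<D>'(3) by (rule F_mono)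
  also have "\<dots> = \<Union>(F ` \<D>')" by (rule F)
  finally show "\<exists>\<C>'. finite \<C>' \<and> \<C>' \<subseteq> \<C> \<and> \<Union>\<C> \<subseteq> \<Union>\<C>'"
    using \<D>' \<C> by (intro exI[of _ "F ` \<D>'"]) auto
qed

lemma noetherian_space_imp_noetherian_family:
  assumes "noetherian_space X"
  shows "noetherian_family {U. openin X U}"
  unfolding noetherian_family_def
proof (intro allI impI)
  fix \<C> assume \<C>: "\<C> \<subseteq> {U. openin X U}"
  then have "\<Union>\<C> \<subseteq> topspace X" by (auto dest: openin_subset)
  with assms have "compactin X (\<Union>\<C>)" unfolding noetherian_space_def by simp
  with \<C> show "\<exists>\<C>'. finite \<C>' \<and> \<C>' \<subseteq> \<C> \<and> \<Union>\<C> \<subseteq> \<Union>\<C>'"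
    unfolding compactin_def by (elim conjE allE impE) auto
qed

lemma finite_intersection_of_eq_finite'_intersection_of:
  assumes "UNIV \<in> \<B>"
  shows "finite intersection_of (\<lambda>S. S \<in> \<B>) = finite' intersection_of (\<lambda>S. S \<in> \<B>)"
proof (intro ext iffI)
  fix S assume "(finite intersection_of (\<lambda>S. S \<in> \<B>)) S"
  then obtain \<U> where "finite \<U>" "\<U> \<subseteq> \<B>" "\<Inter>\<U> = S"
    unfolding intersection_of_def by auto
  with assms show "(finite' intersection_of (\<lambda>S. S \<in> \<B>)) S"
    unfolding intersection_of_def by (cases "\<U> = {}") (auto intro: exI[of _ "{UNIV}"])
qed (auto simp: intersection_of_def)

lemma noetherian_space_topology_generated_by:
  assumes "UNIV \<in> \<B>" and "noetherian_family \<B>"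
  shows "noetherian_space (topology_generated_by \<B>)"
  unfolding noetherian_space_def
proof (intro allI impI)
  fix A assume A: "A \<subseteq> topspace (topology_generated_by \<B>)"
  let ?X = "subtopology (topology_generated_by \<B>) A"
  have "openin (topology_generated_by \<B>) = generate_topology_on \<B>"
    by (intro ext) (rule openin_topology_generated_by_iff)
  then have open_eq: "openin (topology_generated_by \<B>) = arbitrary union_of finite intersection_of (\<lambda>S. S \<in> \<B>)"
    by (simp only: generate_topology_on_eq finite_intersection_of_eq_finite'_intersection_of[OF assms(1)])
  have "?X = topology (openin ?X)" by (rule openin_inverse[symmetric])
  also have "openin ?X = openin (topology_generated_by \<B>) relative_to A"
    by (rule openin_relative_to[symmetric])
  also have "\<dots> = arbitrary union_of (finite intersection_of (\<lambda>S. S \<in> \<B>) relative_to A)"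
    unfolding open_eq arbitrary_union_of_relative_to ..
  finally have X_eq: "?X = topology (arbitrary union_of (finite intersection_of (\<lambda>S. S \<in> \<B>) relative_to A))" .
  have "compact_space ?X"
  proof (rule Alexander_subbase_alt[OF _ _ X_eq[symmetric]])
    show "A \<subseteq> \<Union>\<B>" using assms(1) by blast
  next
    fix \<C> assume "\<C> \<subseteq> \<B>" "A \<subseteq> \<Union>\<C>"
    obtain \<C>' where "finite \<C>'" "\<C>' \<subseteq> \<C>" "\<Union>\<C> \<subseteq> \<Union>\<C>'"
      using assms(2) \<open>\<C> \<subseteq> \<B>\<close> by (rule noetherian_familyD)
    with \<open>A \<subseteq> \<Union>\<C>\<close> show "\<exists>\<C>'. finite \<C>' \<and> \<C>' \<subseteq> \<C> \<and> A \<subseteq> \<Union>\<C>'"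
      by (intro exI[of _ \<C>']) auto
  qed
  with A show "compactin (topology_generated_by \<B>) A"
    by (simp add: compactin_subspace)
qed

lemma noetherian_family_open_rectangles:
  assumes "noetherian_space X" and "noetherian_space Y"
  shows "noetherian_family {U \<times> V | U V. openin X U \<and> openin Y V}"
proof -
  define \<B> where "\<B> = insert UNIV ((\<lambda>U. U \<times> UNIV) ` {U. openin X U} \<union> (\<lambda>V. UNIV \<times> V) ` {V. openin Y V})"
  have "noetherian_family ((\<lambda>U. U \<times> UNIV) ` {U. openin X U})"
    by (rule noetherian_family_image[OF _ noetherian_space_imp_noetherian_family[OF assms(1)]]) blast
  moreover have "noetherian_family ((\<lambda>V. UNIV \<times> V) ` {V. openin Y V})"
    by (rule noetherian_family_image[OF _ noetherian_space_imp_noetherian_family[OF assms(2)]]) blast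
  ultimately have "noetherian_family \<B>"
    unfolding \<B>_def by (intro noetherian_family_insert noetherian_family_Un)
  then have "noetherian_family {W. openin (topology_generated_by \<B>) W}"
    by (intro noetherian_space_imp_noetherian_family noetherian_space_topology_generated_by)
      (simp add: \<B>_def)
  moreover have "{U \<times> V | U V. openin X U \<and> openin Y V} \<subseteq> {W. openin (topology_generated_by \<B>) W}"
  proof (safe)
    fix U V assume "openin X U" "openin Y V"
    have "openin (topology_generated_by \<B>) ((U \<times> UNIV) \<inter> (UNIV \<times> V))"
      using \<open>openin X U\<close> \<open>openin Y V\<close>
      by (intro openin_Int topology_generated_by_Basis) (auto simp: \<B>_def)
    moreover have "(U \<times> UNIV) \<inter> (UNIV \<times> V) = U \<times> V" by blast
    ultimately show "openin (topology_generated_by \<B>) (U \<times> V)" by simp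
  qed
  ultimately show ?thesis
    by (rule noetherian_family_subset)
qed

lemma up_closure_image_Union:
  "up_closure le (f ` \<Union>\<A>) = (\<Union>A\<in>\<A>. up_closure le (f ` A))"
  unfolding up_closure_def by auto

lemma concat_lang_eq_image: "concat_lang U V = (\<lambda>(u, v). u @ v) ` (U \<times> V)"
  unfolding concat_lang_def by auto

lemma openin_topology_generated_by_mono:
  assumes "\<B> \<subseteq> \<B>'" and "openin (topology_generated_by \<B>) U"
  shows "openin (topology_generated_by \<B>') U"
  using istopology_openin topology_generated_by_Basis assms
  by (metis generate_topology_on_coarsest openin_topology_generated_by subsetD)

lemma word_refine_eq:
  "word_refine \<theta> \<tau> = topology_generated_by (insert UNIV
     ((\<lambda>R. up_closure (higman_le (spec_le \<theta>)) ((\<lambda>(u, v). u @ v) ` R)) `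
        {U \<times> V | U V. openin \<tau> U \<and> openin \<tau> V} \<union>
      (\<lambda>W. up_closure (higman_le (spec_le \<theta>)) ((\<lambda>a. [a]) ` W)) ` {W. openin \<theta> W}))"
  unfolding word_refine_def concat_lang_eq_image by (rule arg_cong[where f = topology_generated_by]) blast

theorem mainTheorem11:
  fixes \<theta> :: "'a topology"
  assumes "topspace \<theta> = UNIV"
    and "noetherian_space \<theta>"
  shows "refinement_function (UNIV :: 'a list set) (word_refine \<theta>)"
  unfolding refinement_function_def
proof (intro conjI allI impI)
  fix \<tau> :: "'a list topology"
  show "topspace (word_refine \<theta> \<tau>) = UNIV"
    unfolding word_refine_eq by simp
next
  fix \<tau> \<tau>' :: "'a list topology" and W
  assume "topspace \<tau> = UNIV \<and> topspace \<tau>' = UNIV \<and> (\<forall>U. openin \<tau> U \<longrightarrow> openin \<tau>' U)"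
  then have "{U \<times> V | U V. openin \<tau> U \<and> openin \<tau> V} \<subseteq> {U \<times> V | U V. openin \<tau>' U \<and> openin \<tau>' V}"
    by blast
  then show "openin (word_refine \<theta> \<tau>) W \<Longrightarrow> openin (word_refine \<theta> \<tau>') W"
    unfolding word_refine_eq
    by (elim openin_topology_generated_by_mono[rotated]) (intro insert_mono Un_mono image_mono subset_refl)
next
  fix \<tau> :: "'a list topology"
  assume "topspace \<tau> = UNIV \<and> noetherian_space \<tau>"
  then have "noetherian_family {U \<times> V | U V. openin \<tau> U \<and> openin \<tau> V}"
    by (intro noetherian_family_open_rectangles) simp_all
  then show "noetherian_space (word_refine \<theta> \<tau>)"
    unfolding word_refine_eq using assms(2)
    by (intro noetherian_space_topology_generated_by noetherian_family_insert noetherian_family_Un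
        noetherian_family_image noetherian_space_imp_noetherian_family up_closure_image_Union) simp_all
qed

end
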